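(* Let $p$ be a prime, $q$ a power of $p$, $n\ge1$ odd, $m=\frac{q^n+1}{q+1}$, and let $G\le B(Q_\infty)$ be a subgroup. Then, up to replacing $G$ by a conjugate subgroup in $B(Q_\infty)$, the associated data $G_0,G_2,G_3$ satisfy: (i) $G_0$ is a cyclic subgroup of $\mu$, the group of $m(q^2-1)$-th roots of unity in $\mathbb{F}_{q^{2n}}^*$; (ii) $G_2\subset\mathbb{F}_{q^2}$ is a vector space over $\mathbb{F}_p(G_0^m)$; (iii) $G_3\subset\{c\in\mathbb{F}_{q^2}\mid c^q+c=0\}$ is a vector space over $\mathbb{F}_p(G_0^{q^n+1})$ containing $W$, where $W=\{b_1b_2^q-b_2b_1^q\mid b_1,b_2\in G_2\}$ if $p$ is odd and $W=\{b^{q+1}\mid b\in G_2\}$ if $p=2$. Conversely, for any $G_0,G_2,G_3$ satisfying (i), (ii) and (iii) there exists a subgroup $G\le B(Q_\infty)$ giving rise to this triple.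
   Context: Let $\mathcal C_n=\mathbb{F}_{q^{2n}}(x,y,z)$ be the function field defined by $x^q+x=y^{q+1}$ and $z^m=y^{q^2}-y$. Let $A(P_\infty)$ be the group of symbols $[a,b,c]$ with $a\in\mathbb{F}_{q^2}^*$, $b,c\in\mathbb{F}_{q^2}$, $c^q+c=b^{q+1}$, group law $[a',b',c']\circ[a,b,c]=[a'a,ab'+b,a^{q+1}c'+ab^qb'+c]$. Let $B(Q_\infty)$ be the group of automorphisms $[a,b,c,d]$ of $\mathcal C_n$ given by $x\mapsto a^{q+1}x+ab^qy+c$, $y\mapsto ay+b$, $z\mapsto dz$, where $a\in\mathbb{F}_{q^2}^*$, $b,c\in\mathbb{F}_{q^2}$, $c^q+c=b^{q+1}$, $d\in\mathbb{F}_{q^{2n}}$, $d^m=a$, with group law $[a',b',c',d']\circ[a,b,c,d]=[a'a,ab'+b,a^{q+1}c'+ab^qb'+c,d'd]$. Let $\pi([a,b,c,d])=[a,b,c]$ and $\pi_d([a,b,c,d])=d$. For a subgroup $G$: $G_0=\pi_d(G)$; $U=\{[1,b,c]\in\pi(G)\}$; $G_2=\{b:[1,b,c]\in U\}$ (image of $\psi:U\to\mathbb{F}_{q^2}$, $[1,b,c]\mapsto b$); $G_3=\{c:[1,0,c]\in\pi(G)\}$ (the kernel of $\psi$, identified with a subset of $\mathbb{F}_{q^2}$). For $S\subset\mathbb{F}_{q^{2n}}$ and integer $i$, $S^i=\{s^i:s\in S\}$ and $\mathbb{F}_p(S)$ denotes the field generated over $\mathbb{F}_p$ by $S$. *)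

theory Defs
  imports "HOL-Algebra.Group" "HOL-Computational_Algebra.Primes"
begin

text \<open>The ambient field F_{q^{2n}} is a finite field type 'k with CARD('k) = q^(2n).
  F_{q^2} is realised as the set of fixed points of x \<mapsto> x^(q^2).\<close>

definition Fq2 :: "nat \<Rightarrow> 'k::{field,finite} set" where
  "Fq2 q = {x. x ^ (q^2) = x}"

definition mm :: "nat \<Rightarrow> nat \<Rightarrow> nat" where
  "mm q n = (q ^ n + 1) div (q + 1)"

text \<open>Elements [a,b,c,d] of B(Q_infinity) are represented as tuples (a,b,c,d).\<close>

definition Bset :: "nat \<Rightarrow> nat \<Rightarrow> ('k::{field,finite} \<times> 'k \<times> 'k \<times> 'k) set" where
  "Bset q n = {(a,b,c,d). a \<in> Fq2 q \<and> a \<noteq> 0 \<and> b \<in> Fq2 q \<and> c \<in> Fq2 q \<and>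
                 c ^ q + c = b ^ (q+1) \<and> d ^ mm q n = a}"

definition Bmult :: "nat \<Rightarrow> ('k::{field,finite} \<times> 'k \<times> 'k \<times> 'k) \<Rightarrow> ('k \<times> 'k \<times> 'k \<times> 'k)
    \<Rightarrow> ('k \<times> 'k \<times> 'k \<times> 'k)" where
  "Bmult q g' g = (case g' of (a',b',c',d') \<Rightarrow> case g of (a,b,c,d) \<Rightarrow>
      (a' * a, a * b' + b, a ^ (q+1) * c' + a * b ^ q * b' + c, d' * d))"

definition Bgrp :: "nat \<Rightarrow> nat \<Rightarrow> ('k::{field,finite} \<times> 'k \<times> 'k \<times> 'k) monoid" where
  "Bgrp q n = \<lparr>carrier = Bset q n, monoid.mult = Bmult q, one = (1, 0, 0, 1)\<rparr>"

definition conjB :: "nat \<Rightarrow> nat \<Rightarrow> ('k::{field,finite} \<times> 'k \<times> 'k \<times> 'k)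
    \<Rightarrow> ('k \<times> 'k \<times> 'k \<times> 'k) set \<Rightarrow> ('k \<times> 'k \<times> 'k \<times> 'k) set" where
  "conjB q n h G = (\<lambda>g. h \<otimes>\<^bsub>Bgrp q n\<^esub> g \<otimes>\<^bsub>Bgrp q n\<^esub> inv\<^bsub>Bgrp q n\<^esub> h) ` G"

definition G0of :: "('k \<times> 'k \<times> 'k \<times> 'k) set \<Rightarrow> 'k set" where
  "G0of G = {d. \<exists>a b c. (a,b,c,d) \<in> G}"

definition G2of :: "('k::one \<times> 'k \<times> 'k \<times> 'k) set \<Rightarrow> 'k set" where
  "G2of G = {b. \<exists>c d. (1,b,c,d) \<in> G}"

definition G3of :: "('k::{one,zero} \<times> 'k \<times> 'k \<times> 'k) set \<Rightarrow> 'k set" where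
  "G3of G = {c. \<exists>d. (1,0,c,d) \<in> G}"

text \<open>Subfields of the ambient field, and F_p(S) = subfield generated by S
  (intersection of all subfields containing S; every subfield contains F_p).\<close>
definition is_subfield_set :: "'k::field set \<Rightarrow> bool" where
  "is_subfield_set F \<longleftrightarrow> 0 \<in> F \<and> 1 \<in> F \<and> (\<forall>x\<in>F. \<forall>y\<in>F. x + y \<in> F \<and> x * y \<in> F) \<and>
     (\<forall>x\<in>F. - x \<in> F) \<and> (\<forall>x\<in>F. x \<noteq> 0 \<longrightarrow> inverse x \<in> F)"

definition gen_field :: "'k::field set \<Rightarrow> 'k set" where
  "gen_field S = \<Inter> {F. is_subfield_set F \<and> S \<subseteq> F}"

definition is_vs_over :: "'k::field set \<Rightarrow> 'k set \<Rightarrow> bool" where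
  "is_vs_over F V \<longleftrightarrow> 0 \<in> V \<and> (\<forall>x\<in>V. \<forall>y\<in>V. x + y \<in> V) \<and> (\<forall>x\<in>V. - x \<in> V) \<and>
     (\<forall>a\<in>F. \<forall>x\<in>V. a * x \<in> V)"

definition Wset :: "nat \<Rightarrow> nat \<Rightarrow> 'k::field set \<Rightarrow> 'k set" where
  "Wset p q G2 = (if p = 2 then {b ^ (q+1) | b. b \<in> G2}
                  else {b1 * b2 ^ q - b2 * b1 ^ q | b1 b2. b1 \<in> G2 \<and> b2 \<in> G2})"

definition triple_ok :: "nat \<Rightarrow> nat \<Rightarrow> nat \<Rightarrow> 'k::{field,finite} set \<Rightarrow> 'k set \<Rightarrow> 'k set \<Rightarrow> bool" where
  "triple_ok p q n G0 G2 G3 \<longleftrightarrow>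
     (\<exists>g::'k. g ^ (mm q n * (q^2 - 1)) = 1 \<and> G0 = range (\<lambda>k::nat. g ^ k)) \<and>
     G2 \<subseteq> Fq2 q \<and> is_vs_over (gen_field ((\<lambda>x. x ^ mm q n) ` G0)) G2 \<and>
     G3 \<subseteq> {c \<in> Fq2 q. c ^ q + c = 0} \<and>
     is_vs_over (gen_field ((\<lambda>x. x ^ (q^n + 1)) ` G0)) G3 \<and>
     Wset p q G2 \<subseteq> G3"

end

theory Submission
  imports "HOL-Algebra.Algebraic_Closure_Type" "HOL-Number_Theory.Residues" Defs
begin

text \<open>
  For a subgroup \<open>G\<close> no conjugation is needed. \<open>G\<^sub>0\<close> is a subgroup of the multiplicative
  group of a finite field, hence cyclic, and \<open>d ^ m = a\<close> with \<open>a ^ (q\<^sup>2 - 1) = 1\<close> bounds its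
  order. Conjugating \<open>[1, b, c, e]\<close> by \<open>[a, \<beta>, \<gamma>, d]\<close> multiplies \<open>b\<close> by \<open>a = d ^ m\<close>, and for
  \<open>b = 0\<close> multiplies \<open>c\<close> by \<open>a ^ (q + 1) = d ^ (q ^ n + 1)\<close>; so \<open>G\<^sub>2\<close> and \<open>G\<^sub>3\<close> are vector
  spaces. The quotient of two unipotent elements with the same \<open>b\<close> lies in \<open>G\<^sub>3\<close>; applied to
  \<open>u v\<close> and \<open>v u\<close>, and in characteristic 2 to \<open>u u\<close> and \<open>1\<close>, this puts \<open>W\<close> into \<open>G\<^sub>3\<close>.

  Conversely, given a triple, choose for every \<open>b \<in> G\<^sub>2\<close> a solution \<open>c = f b\<close> in \<open>Fq2 q\<close> of
  \<open>c ^ q + c = b ^ (q + 1)\<close> such that \<open>f (x + y) - f x - f y - x ^ q * y\<close> and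
  \<open>f (a * b) - a ^ (q + 1) * f b\<close> lie in \<open>G\<^sub>3\<close>. Then the set of all \<open>[d ^ m, b, f b + t, d]\<close>
  with \<open>d \<in> G\<^sub>0\<close>, \<open>b \<in> G\<^sub>2\<close>, \<open>t \<in> G\<^sub>3\<close> is closed under multiplication, hence a subgroup, and
  it has the prescribed data. For odd \<open>p\<close> take \<open>f b = b ^ (q + 1) / 2\<close>. For \<open>p = 2\<close>, build \<open>f\<close>
  coset by coset over \<open>\<bbbF>\<^sub>2\<close> using some \<open>\<theta>\<close> with \<open>\<theta> ^ q + \<theta> = 1\<close>, and then average it over
  the powers of \<open>g ^ m\<close>, for a generator \<open>g\<close> of \<open>G\<^sub>0\<close>, to make it equivariant.
\<close>

section \<open>Finite fields\<close>

lemma nat_pow_type_algebra: "a [^]\<^bsub>ring_of_type_algebra\<^esub> (i::nat) = (a::'a::field) ^ i"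
  by (induction i) (simp_all add: ring_of_type_algebra_def nat_pow_def)

lemma power_card_minus_one_eq_1:
  fixes x :: "'a::{field,finite}"
  assumes "x \<noteq> 0"
  shows "x ^ (card (UNIV :: 'a set) - 1) = 1"
proof -
  (* Qualified names: Ring_Divisibility and Polynomial declare their own mult_of and order. *)
  let ?R = "ring_of_type_algebra :: 'a ring"
  interpret R: field ?R by (rule field_from_type_algebra)
  interpret G: group "Multiplicative_Group.mult_of ?R" by (rule R.field_mult_group)
  have "x \<in> carrier (Multiplicative_Group.mult_of ?R)"
    using assms by (simp add: ring_of_type_algebra_def)
  then have "x [^]\<^bsub>?R\<^esub> Coset.order (Multiplicative_Group.mult_of ?R) = 1"
    using G.pow_order_eq_1 by (simp add: Multiplicative_Group.nat_pow_mult_of ring_of_type_algebra_def)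
  moreover have "carrier ?R = UNIV"
    by (simp add: ring_of_type_algebra_def)
  ultimately show ?thesis
    by (simp add: R.order_mult_of Coset.order_def nat_pow_type_algebra)
qed

lemma inverse_eq_power:
  fixes x :: "'a::{field,finite}"
  assumes "x \<noteq> 0"
  shows "inverse x = x ^ (card (UNIV :: 'a set) - 2)"
proof -
  have "card (UNIV :: 'a set) \<ge> 2"
    using card_mono[of "UNIV :: 'a set" "{0, 1}"] by simp
  then have "x ^ (card (UNIV :: 'a set) - 2) * x = x ^ (card (UNIV :: 'a set) - 1)"
    by (metis One_nat_def Suc_diff_Suc Suc_le_lessD numeral_2_eq_2 power_Suc2)
  with power_card_minus_one_eq_1[OF assms] assms show ?thesis
    by (simp add: field_simps)
qed

lemma finite_field_generator:
  "\<exists>g::'a::{field,finite}. g \<noteq> 0 \<and> (\<forall>x. x \<noteq> 0 \<longrightarrow> (\<exists>i. x = g ^ i))"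
proof -
  let ?R = "ring_of_type_algebra :: 'a ring"
  interpret R: field ?R by (rule field_from_type_algebra)
  have "finite (carrier ?R)"
    by (simp add: ring_of_type_algebra_def)
  then obtain g where "g \<in> carrier (Multiplicative_Group.mult_of ?R)"
    and g: "carrier (Multiplicative_Group.mult_of ?R) = {g [^]\<^bsub>?R\<^esub> i | i::nat. i \<in> UNIV}"
    using R.finite_field_mult_group_has_gen by blast
  moreover have carrier: "carrier (Multiplicative_Group.mult_of ?R) = UNIV - {0}"
    by (simp add: ring_of_type_algebra_def)
  ultimately have "g \<noteq> 0"
    by blast
  moreover have "\<exists>i. x = g ^ i" if "x \<noteq> 0" for x
  proof -
    have "x \<in> carrier (Multiplicative_Group.mult_of ?R)"
      using that carrier by blast
    then show ?thesis
      unfolding g by (auto simp: nat_pow_type_algebra)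
  qed
  ultimately show ?thesis
    by blast
qed

lemma power_split_mod:
  fixes g :: "'a::monoid_mult"
  shows "g ^ j = (g ^ i) ^ (j div i) * g ^ (j mod i)"
proof -
  have "g ^ j = g ^ (i * (j div i) + j mod i)"
    by simp
  then show ?thesis
    by (simp only: power_add power_mult)
qed

lemma generator_power_eq_1_imp_le:
  fixes g :: "'a::{field,finite}"
  assumes gen: "\<And>x. x \<noteq> 0 \<Longrightarrow> \<exists>i. x = g ^ i" and "g ^ i = 1" "i > 0"
  shows "card (UNIV :: 'a set) - 1 \<le> i"
proof -
  have sub: "UNIV - {0} \<subseteq> (\<lambda>j. g ^ j) ` {..<i}"
  proof
    fix x :: 'a assume "x \<in> UNIV - {0}"
    then obtain j where "x = g ^ j"
      using gen by blast
    then have "x = g ^ (j mod i)"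
      using power_split_mod[of g j i] assms(2) by simp
    then show "x \<in> (\<lambda>j. g ^ j) ` {..<i}"
      using assms(3) by simp
  qed
  have "card (UNIV - {0::'a}) \<le> card ((\<lambda>j. g ^ j) ` {..<i})"
    by (rule card_mono[OF _ sub]) simp
  also have "\<dots> \<le> i"
    using card_image_le[of "{..<i}" "\<lambda>j. g ^ j"] by simp
  finally show ?thesis
    by (simp add: card_Diff_singleton)
qed

text \<open>The generator is the least positive power of a generator of the whole multiplicative
  group that lies in the subgroup.\<close>

lemma finite_field_subgroup_cyclic:
  fixes S :: "'a::{field,finite} set"
  assumes "1 \<in> S" "0 \<notin> S" "\<And>x y. x \<in> S \<Longrightarrow> y \<in> S \<Longrightarrow> x * y \<in> S"
    "\<And>x. x \<in> S \<Longrightarrow> inverse x \<in> S"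
  shows "\<exists>g. S = range (\<lambda>k::nat. g ^ k)"
proof -
  obtain \<gamma> :: 'a where "\<gamma> \<noteq> 0" and gen: "\<And>x. x \<noteq> 0 \<Longrightarrow> \<exists>i. x = \<gamma> ^ i"
    using finite_field_generator by blast
  have pow_in: "x ^ k \<in> S" if "x \<in> S" for x k
    using that by (induction k) (auto intro: assms)
  from \<open>\<gamma> \<noteq> 0\<close> have "\<gamma> ^ (card (UNIV :: 'a set) - 1) \<in> S"
    using power_card_minus_one_eq_1[of \<gamma>] assms(1) by simp
  moreover have "card (UNIV :: 'a set) - 1 > 0"
    using card_mono[of "UNIV :: 'a set" "{0, 1}"] by simp
  ultimately have ex: "\<exists>i. 0 < i \<and> \<gamma> ^ i \<in> S"
    by blast
  define i0 where "i0 = (LEAST i. 0 < i \<and> \<gamma> ^ i \<in> S)"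
  have i0: "0 < i0" "\<gamma> ^ i0 \<in> S"
    using LeastI_ex[OF ex] unfolding i0_def by auto
  have "S \<subseteq> range (\<lambda>k::nat. (\<gamma> ^ i0) ^ k)"
  proof
    fix x assume x: "x \<in> S"
    then obtain j where j: "x = \<gamma> ^ j"
      using gen assms(2) by metis
    have split: "x = (\<gamma> ^ i0) ^ (j div i0) * \<gamma> ^ (j mod i0)"
      using j power_split_mod by blast
    have pow_div: "(\<gamma> ^ i0) ^ (j div i0) \<in> S"
      using pow_in i0(2) by blast
    then have "(\<gamma> ^ i0) ^ (j div i0) \<noteq> 0"
      using assms(2) by force
    then have "\<gamma> ^ (j mod i0) = inverse ((\<gamma> ^ i0) ^ (j div i0)) * x"
      using split by simp
    then have "\<gamma> ^ (j mod i0) \<in> S"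
      using assms(3,4) pow_div x by simp
    then have "j mod i0 = 0"
      using i0(1) Least_le[of "\<lambda>i. 0 < i \<and> \<gamma> ^ i \<in> S" "j mod i0"]
      unfolding i0_def[symmetric] by (meson mod_less_divisor not_gr0 not_le)
    then show "x \<in> range (\<lambda>k::nat. (\<gamma> ^ i0) ^ k)"
      using split by auto
  qed
  moreover have "range (\<lambda>k::nat. (\<gamma> ^ i0) ^ k) \<subseteq> S"
    using pow_in i0(2) by blast
  ultimately show ?thesis
    by blast
qed

section \<open>Generated subfields and vector spaces\<close>

lemma is_subfield_set_gen_field: "is_subfield_set (gen_field S)"
  unfolding gen_field_def is_subfield_set_def by auto

lemma subset_gen_field: "S \<subseteq> gen_field S"
  unfolding gen_field_def by auto

lemma gen_field_inverse: "x \<in> gen_field S \<Longrightarrow> inverse x \<in> gen_field S"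
  using is_subfield_set_gen_field[of S] unfolding is_subfield_set_def by (cases "x = 0") auto

lemma two_mem_gen_field: "2 \<in> gen_field S"
  using is_subfield_set_gen_field[of S] unfolding is_subfield_set_def one_add_one[symmetric] by blast

text \<open>In a finite field the inverse is a power, so closure of V under multiplication by S
  already gives closure under the generated subfield.\<close>

lemma is_vs_over_gen_fieldI:
  fixes V S :: "'a::{field,finite} set"
  assumes "0 \<in> V" "\<And>x y. x \<in> V \<Longrightarrow> y \<in> V \<Longrightarrow> x + y \<in> V" "\<And>x. x \<in> V \<Longrightarrow> - x \<in> V"
    "\<And>s x. s \<in> S \<Longrightarrow> x \<in> V \<Longrightarrow> s * x \<in> V"
  shows "is_vs_over (gen_field S) V"
proof -
  define M where "M = {l. \<forall>x\<in>V. l * x \<in> V}"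
  have power_M: "l ^ k \<in> M" if "l \<in> M" for l k
    using that by (induction k) (auto simp: M_def mult.assoc)
  have "is_subfield_set M"
    unfolding is_subfield_set_def
  proof (intro conjI ballI impI)
    show "0 \<in> M" "1 \<in> M"
      using assms(1) by (auto simp: M_def)
    fix x y assume "x \<in> M" "y \<in> M"
    then show "x + y \<in> M" "x * y \<in> M"
      using assms(2) by (auto simp: M_def distrib_right mult.assoc)
  next
    fix x assume "x \<in> M"
    then show "- x \<in> M"
      using assms(3) by (auto simp: M_def)
  next
    fix x assume "x \<in> M" "x \<noteq> 0"
    then show "inverse x \<in> M"
      using power_M[OF \<open>x \<in> M\<close>] inverse_eq_power[OF \<open>x \<noteq> 0\<close>] by simp
  qed
  moreover have "S \<subseteq> M"
    using assms(4) by (auto simp: M_def)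
  ultimately have "gen_field S \<subseteq> M"
    unfolding gen_field_def by blast
  then show ?thesis
    using assms unfolding is_vs_over_def M_def by blast
qed

context
  fixes F V :: "'a::field set"
  assumes vs: "is_vs_over F V"
begin

lemma is_vs_over_zero: "0 \<in> V"
  using vs unfolding is_vs_over_def by blast

lemma is_vs_over_add: "x \<in> V \<Longrightarrow> y \<in> V \<Longrightarrow> x + y \<in> V"
  using vs unfolding is_vs_over_def by blast

lemma is_vs_over_uminus: "x \<in> V \<Longrightarrow> - x \<in> V"
  using vs unfolding is_vs_over_def by blast

lemma is_vs_over_smult: "a \<in> F \<Longrightarrow> x \<in> V \<Longrightarrow> a * x \<in> V"
  using vs unfolding is_vs_over_def by blast

lemma is_vs_over_diff: "x \<in> V \<Longrightarrow> y \<in> V \<Longrightarrow> x - y \<in> V"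
  unfolding diff_conv_add_uminus by (intro is_vs_over_add is_vs_over_uminus)

lemma is_vs_over_sum: "(\<And>i. i \<in> I \<Longrightarrow> h i \<in> V) \<Longrightarrow> sum h I \<in> V"
  by (induction I rule: infinite_finite_induct) (auto intro: is_vs_over_zero is_vs_over_add)

end

lemma is_subfield_set_power: "is_subfield_set F \<Longrightarrow> x \<in> F \<Longrightarrow> x ^ k \<in> F"
  by (induction k) (auto simp: is_subfield_set_def)

lemma inverse_power_mult_power:
  fixes \<alpha> :: "'a::field"
  assumes "\<alpha> \<noteq> 0"
  shows "inverse \<alpha> ^ k * \<alpha> ^ k = 1"
  using assms by (simp add: power_mult_distrib[symmetric])

lemma sum_lessThan_shift_periodic:
  fixes h :: "nat \<Rightarrow> 'a::cancel_comm_monoid_add"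
  assumes "h L = h 0"
  shows "(\<Sum>i<L. h (Suc i)) = (\<Sum>i<L. h i)"
  using sum.lessThan_Suc_shift[of h L] assms by (simp add: add.commute)

lemma add_closed_union_translate:
  fixes S :: "'a::ab_group_add set"
  assumes "v + v = 0" "\<And>x y. x \<in> S \<Longrightarrow> y \<in> S \<Longrightarrow> x + y \<in> S"
    and "x \<in> S \<union> (+) v ` S" "y \<in> S \<union> (+) v ` S"
  shows "x + y \<in> S \<union> (+) v ` S"
proof -
  have "v + x0 + (v + y0) = x0 + y0" for x0 y0
    using assms(1) by (metis add.assoc add.commute add.left_neutral)
  then show ?thesis
    using assms(2-4) by (auto simp: algebra_simps)
qed

lemma (in group) finite_subgroupI:
  assumes "finite H" "H \<subseteq> carrier G" "\<one> \<in> H" "\<And>x y. x \<in> H \<Longrightarrow> y \<in> H \<Longrightarrow> x \<otimes> y \<in> H"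
  shows "subgroup H G"
proof (rule subgroupI)
  fix a assume a: "a \<in> H"
  have "inj_on (\<lambda>y. y \<otimes> a) H"
    using assms(2) a by (intro inj_onI) (auto simp: right_cancel subsetD)
  moreover have "(\<lambda>y. y \<otimes> a) ` H \<subseteq> H"
    using assms(4) a by blast
  ultimately have "(\<lambda>y. y \<otimes> a) ` H = H"
    using endo_inj_surj[OF assms(1)] by blast
  then have "\<one> \<in> (\<lambda>y. y \<otimes> a) ` H"
    using assms(3) by simp
  then obtain y where y: "y \<in> H" "y \<otimes> a = \<one>"
    by force
  then have "inv a = y"
    using assms(2) a by (intro inv_equality) auto
  then show "inv a \<in> H"
    using y by simp
qed (use assms in auto)

section \<open>The group \<open>B(Q\<^sub>\<infinity>)\<close>\<close>

locale Bgrp_field =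
  fixes p q n e :: nat
  assumes prime_p: "prime p" and e_ge_1: "e \<ge> 1" and q_def: "q = p ^ e" and odd_n: "odd n"
    and card_UNIV: "card (UNIV :: 'k::{field,finite} set) = q ^ (2 * n)"
begin

lemma CHAR_eq: "CHAR('k) = p"
proof -
  have "prime CHAR('k)"
    by (rule prime_CHAR_semidom) (simp add: finite_imp_CHAR_pos)
  moreover have "CHAR('k) dvd p ^ (e * (2 * n))"
    using CHAR_dvd_CARD[where 'a='k] card_UNIV q_def by (simp add: power_mult)
  ultimately show ?thesis
    using prime_p by (metis prime_dvd_power primes_dvd_imp_eq)
qed

lemma q_ge_2: "q \<ge> 2"
proof -
  have "p \<ge> 2"
    using prime_p prime_ge_2_nat by blast
  then show ?thesis
    using q_def e_ge_1 power_increasing[of 1 e p] by simp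
qed

lemma q_squared_gt_1: "q\<^sup>2 > 1"
  using one_less_power[of q 2] q_ge_2 by simp

lemma two_eq_zero_iff: "(2::'k) = 0 \<longleftrightarrow> p = 2"
proof -
  have "(2::'k) = 0 \<longleftrightarrow> p dvd 2"
    using of_nat_eq_0_iff_char_dvd[of 2, where 'a='k] CHAR_eq by simp
  then show ?thesis
    using prime_p by (auto simp: primes_dvd_imp_eq)
qed

lemma char_2_add_self: "p = 2 \<Longrightarrow> (x::'k) + x = 0"
  using two_eq_zero_iff by (metis mult_2 mult_zero_left)

lemma char_2_uminus: "p = 2 \<Longrightarrow> - (x::'k) = x"
  using char_2_add_self by (simp add: eq_neg_iff_add_eq_0)

lemma frobenius_add: "((x::'k) + y) ^ q = x ^ q + y ^ q"
  by (rule freshmans_dream') (auto simp: CHAR_eq prime_p q_def)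

lemma frobenius_sum: "(sum (f :: 'a \<Rightarrow> 'k) A) ^ q = (\<Sum>i\<in>A. f i ^ q)"
  by (rule freshmans_dream_sum') (auto simp: CHAR_eq prime_p q_def)

lemma frobenius_zero [simp]: "(0::'k) ^ q = 0"
  using q_ge_2 by simp

lemma frobenius_uminus: "(- (x::'k)) ^ q = - (x ^ q)"
  using frobenius_add[of x "- x"] by (simp add: eq_neg_iff_add_eq_0 add.commute)

lemma frobenius_diff: "((x::'k) - y) ^ q = x ^ q - y ^ q"
  using frobenius_add[of x "- y"] frobenius_uminus[of y] by simp

lemma frobenius_two: "(2::'k) ^ q = 2"
  using frobenius_add[of 1 1] by (simp add: one_add_one)

lemma mm_mult: "mm q n * (q + 1) = q ^ n + 1"
proof -
  have "[int q ^ n = (-1) ^ n] (mod int (q + 1))"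
    by (intro cong_pow) (simp add: cong_iff_dvd_diff add.commute)
  then have "int (q + 1) dvd int (q ^ n + 1)"
    using odd_n by (simp add: cong_iff_dvd_diff add.commute)
  then show ?thesis
    unfolding mm_def using int_dvd_int_iff by (metis dvd_div_mult_self)
qed

lemma mm_pos: "mm q n > 0"
  using mm_mult by (cases "mm q n") auto

lemma Fq2_0 [simp]: "(0::'k) \<in> Fq2 q" and Fq2_1 [simp]: "(1::'k) \<in> Fq2 q"
  using q_ge_2 by (auto simp: Fq2_def)

lemma Fq2_add: "(x::'k) \<in> Fq2 q \<Longrightarrow> y \<in> Fq2 q \<Longrightarrow> x + y \<in> Fq2 q"
  by (simp add: Fq2_def power2_eq_square power_mult frobenius_add)

lemma Fq2_mult: "(x::'k) \<in> Fq2 q \<Longrightarrow> y \<in> Fq2 q \<Longrightarrow> x * y \<in> Fq2 q"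
  by (simp add: Fq2_def power_mult_distrib)

lemma Fq2_uminus: "(x::'k) \<in> Fq2 q \<Longrightarrow> - x \<in> Fq2 q"
  by (simp add: Fq2_def power2_eq_square power_mult frobenius_uminus)

lemma Fq2_diff: "(x::'k) \<in> Fq2 q \<Longrightarrow> y \<in> Fq2 q \<Longrightarrow> x - y \<in> Fq2 q"
  unfolding diff_conv_add_uminus by (intro Fq2_add Fq2_uminus)

lemma Fq2_inverse: "(x::'k) \<in> Fq2 q \<Longrightarrow> inverse x \<in> Fq2 q"
  by (simp add: Fq2_def power_inverse)

lemma Fq2_divide: "(x::'k) \<in> Fq2 q \<Longrightarrow> y \<in> Fq2 q \<Longrightarrow> x / y \<in> Fq2 q"
  by (simp add: divide_inverse Fq2_mult Fq2_inverse)

lemma Fq2_power: "(x::'k) \<in> Fq2 q \<Longrightarrow> x ^ k \<in> Fq2 q"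
  by (induction k) (auto simp: Fq2_mult)

lemma Fq2_sum: "(\<And>i. i \<in> A \<Longrightarrow> (f i::'k) \<in> Fq2 q) \<Longrightarrow> sum f A \<in> Fq2 q"
  by (induction A rule: infinite_finite_induct) (auto simp: Fq2_add)

lemmas Fq2_closed = Fq2_add Fq2_mult Fq2_uminus Fq2_diff Fq2_inverse Fq2_divide Fq2_power

lemma Fq2_frobenius_frobenius: "(x::'k) \<in> Fq2 q \<Longrightarrow> (x ^ q) ^ q = x"
  by (simp add: Fq2_def power2_eq_square power_mult)

lemma Fq2_norm_frobenius: "(x::'k) \<in> Fq2 q \<Longrightarrow> (x ^ (q + 1)) ^ q = x ^ (q + 1)"
  by (simp add: Fq2_frobenius_frobenius power_mult_distrib)

lemma Fq2_iff_power_eq_1: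
  assumes "(x::'k) \<noteq> 0"
  shows "x \<in> Fq2 q \<longleftrightarrow> x ^ (q\<^sup>2 - 1) = 1"
proof -
  have "x ^ q\<^sup>2 = x ^ (q\<^sup>2 - 1) * x"
    using q_ge_2 by (simp flip: power_Suc2)
  then show ?thesis
    using assms by (auto simp: Fq2_def)
qed

lemma Bset_iff [simp]:
  "((a::'k), b, c, d) \<in> Bset q n \<longleftrightarrow> a \<in> Fq2 q \<and> a \<noteq> 0 \<and> b \<in> Fq2 q \<and> c \<in> Fq2 q \<and>
     c ^ q + c = b ^ (q + 1) \<and> d ^ mm q n = a"
  by (simp add: Bset_def)

lemma Bmult_simp [simp]:
  "Bmult q (a', b', c', d') (a, b, c, d) =
     (a' * a, a * b' + b, a ^ (q + 1) * c' + a * b ^ q * b' + c, d' * (d::'k))"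
  by (simp add: Bmult_def)

lemma Bgrp_simps [simp]:
  "carrier (Bgrp q n) = Bset q n" "monoid.mult (Bgrp q n) = Bmult q"
  "\<one>\<^bsub>Bgrp q n\<^esub> = ((1::'k), 0, 0, 1)"
  by (simp_all add: Bgrp_def)

lemma Bmult_closed:
  assumes "x \<in> Bset q n" "y \<in> Bset q n"
  shows "Bmult q x y \<in> (Bset q n :: ('k \<times> 'k \<times> 'k \<times> 'k) set)"
proof -
  obtain a' b' c' d' a b c d where xy: "x = (a', b', c', d')" "y = (a, b, c, d)"
    by (cases x, cases y) auto
  have a: "a \<in> Fq2 q" and b: "b \<in> Fq2 q" and c: "c ^ q + c = b ^ (q + 1)"
    and c': "c' ^ q + c' = b' ^ (q + 1)"
    using assms unfolding xy by auto
  define C where "C = a ^ (q + 1) * c' + a * b ^ q * b' + c"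
  have "C ^ q = a ^ (q + 1) * c' ^ q + a ^ q * b * b' ^ q + c ^ q"
    by (simp only: C_def frobenius_add power_mult_distrib Fq2_norm_frobenius[OF a]
        Fq2_frobenius_frobenius[OF b])
  then have "C ^ q + C = a ^ (q + 1) * (c' ^ q + c') + a ^ q * b * b' ^ q + a * b ^ q * b' + (c ^ q + c)"
    unfolding C_def by (simp add: algebra_simps)
  also have "\<dots> = (a ^ q * b' ^ q + b ^ q) * (a * b' + b)"
    unfolding c c' by (simp add: power_mult_distrib algebra_simps)
  also have "\<dots> = (a * b' + b) ^ (q + 1)"
    by (simp add: frobenius_add power_mult_distrib)
  finally show ?thesis
    using assms unfolding xy C_def by (auto intro!: Fq2_closed simp: power_mult_distrib)
qed

lemma Bmult_assoc: "Bmult q (Bmult q x y) z = Bmult q x (Bmult q y (z::'k \<times> 'k \<times> 'k \<times> 'k))"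
proof -
  obtain a1 b1 c1 d1 a2 b2 c2 d2 a3 b3 c3 d3 where
    xyz: "x = (a1, b1, c1, d1)" "y = (a2, b2, c2, d2)" "z = (a3, b3, c3, d3)"
    by (cases x, cases y, cases z) auto
  have "(a3 * b2 + b3) ^ q = a3 ^ q * b2 ^ q + b3 ^ q"
    by (simp add: frobenius_add power_mult_distrib)
  then show ?thesis
    unfolding xyz by (simp add: power_mult_distrib algebra_simps)
qed

lemma Bmult_inverse:
  assumes x: "(a, b, c, d) \<in> Bset q n"
  defines "c' \<equiv> (b ^ (q + 1) - c) / a ^ (q + 1)"
  shows "(inverse a, - b / a, c', inverse d) \<in> (Bset q n :: ('k \<times> 'k \<times> 'k \<times> 'k) set)"
    and "Bmult q (inverse a, - b / a, c', inverse d) (a, b, c, d) = (1, 0, 0, 1)"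
proof -
  have a: "a \<in> Fq2 q" "a \<noteq> 0" and b: "b \<in> Fq2 q" and c: "c \<in> Fq2 q" "c ^ q + c = b ^ (q + 1)"
    and d: "d ^ mm q n = a"
    using x by auto
  have "d \<noteq> 0"
    using a(2) d mm_pos by (cases "d = 0") auto
  have "c' ^ q = (b ^ (q + 1) - c ^ q) / a ^ (q + 1)"
    by (simp only: c'_def power_divide frobenius_diff Fq2_norm_frobenius[OF a(1)]
        Fq2_norm_frobenius[OF b])
  moreover have "(b ^ (q + 1) - c ^ q) + (b ^ (q + 1) - c) = b ^ (q + 1)"
    using c(2) by (simp add: algebra_simps)
  moreover have "(- b / a) ^ (q + 1) = b ^ (q + 1) / a ^ (q + 1)"
    by (simp add: power_add power_divide frobenius_uminus)
  ultimately have "c' ^ q + c' = (- b / a) ^ (q + 1)"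
    unfolding c'_def by (metis add_divide_distrib)
  then show "(inverse a, - b / a, c', inverse d) \<in> Bset q n"
    using a b c d unfolding c'_def by (auto intro!: Fq2_closed simp: power_inverse)
  show "Bmult q (inverse a, - b / a, c', inverse d) (a, b, c, d) = (1, 0, 0, 1)"
    using a(2) \<open>d \<noteq> 0\<close> unfolding c'_def by (simp add: field_simps)
qed

lemma group_Bgrp: "group (Bgrp q n :: ('k \<times> 'k \<times> 'k \<times> 'k) monoid)"
proof (rule groupI)
  show "\<one>\<^bsub>Bgrp q n\<^esub> \<in> carrier (Bgrp q n :: ('k \<times> 'k \<times> 'k \<times> 'k) monoid)"
    by simp
next
  fix x :: "'k \<times> 'k \<times> 'k \<times> 'k"
  assume x: "x \<in> carrier (Bgrp q n)"
  then show "\<one>\<^bsub>Bgrp q n\<^esub> \<otimes>\<^bsub>Bgrp q n\<^esub> x = x"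
    by (cases x) simp
  from x obtain a b c d where "x = (a, b, c, d)" "(a, b, c, d) \<in> Bset q n"
    by (cases x) auto
  then show "\<exists>y\<in>carrier (Bgrp q n). y \<otimes>\<^bsub>Bgrp q n\<^esub> x = \<one>\<^bsub>Bgrp q n\<^esub>"
    using Bmult_inverse[of a b c d] by (metis Bgrp_simps)
qed (simp_all add: Bmult_closed Bmult_assoc)

sublocale B: group "Bgrp q n :: ('k \<times> 'k \<times> 'k \<times> 'k) monoid"
  by (rule group_Bgrp)
abbreviation F2 :: "'k set \<Rightarrow> 'k set" where
  "F2 G0 \<equiv> gen_field ((\<lambda>x. x ^ mm q n) ` G0)"

abbreviation F3 :: "'k set \<Rightarrow> 'k set" where
  "F3 G0 \<equiv> gen_field ((\<lambda>x. x ^ (q ^ n + 1)) ` G0)"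

context
  fixes G :: "('k \<times> 'k \<times> 'k \<times> 'k) set"
  assumes subgroup_G: "subgroup G (Bgrp q n)"
begin

lemma subgroup_Bset: "x \<in> G \<Longrightarrow> x \<in> Bset q n"
  using subgroup.subset[OF subgroup_G] by auto

lemma subgroup_Bmult: "x \<in> G \<Longrightarrow> y \<in> G \<Longrightarrow> Bmult q x y \<in> G"
  using subgroup.m_closed[OF subgroup_G] by fastforce

lemma subgroup_unit: "(1, 0, 0, 1) \<in> G"
  using subgroup.one_closed[OF subgroup_G] by simp

lemma subgroup_left_quotient:
  assumes "x \<in> G" "y \<in> G"
  shows "\<exists>w\<in>G. Bmult q x w = y"
proof
  let ?w = "inv\<^bsub>Bgrp q n\<^esub> x \<otimes>\<^bsub>Bgrp q n\<^esub> y"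
  show "?w \<in> G"
    using assms subgroup_G by (intro subgroup.m_closed subgroup.m_inv_closed)
  have "x \<in> carrier (Bgrp q n)" "y \<in> carrier (Bgrp q n)"
    using assms subgroup.subset[OF subgroup_G] by auto
  then have "x \<otimes>\<^bsub>Bgrp q n\<^esub> ?w = y"
    by (simp add: B.m_assoc[symmetric] del: Bgrp_simps)
  then show "Bmult q x ?w = y"
    by simp
qed

lemma G0of_cyclic: "\<exists>g. g ^ (mm q n * (q\<^sup>2 - 1)) = 1 \<and> G0of G = range (\<lambda>k::nat. g ^ k)"
proof -
  have power_mm: "d ^ mm q n \<in> Fq2 q \<and> d ^ mm q n \<noteq> 0" if "d \<in> G0of G" for d
    using that subgroup_Bset unfolding G0of_def by fastforce
  have "\<exists>g. G0of G = range (\<lambda>k::nat. g ^ k)"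
  proof (rule finite_field_subgroup_cyclic)
    show "1 \<in> G0of G"
      using subgroup_unit unfolding G0of_def by blast
    show "0 \<notin> G0of G"
      using power_mm mm_pos by fastforce
  next
    fix x y assume "x \<in> G0of G" "y \<in> G0of G"
    then show "x * y \<in> G0of G"
      unfolding G0of_def using subgroup_Bmult by fastforce
  next
    fix x assume "x \<in> G0of G"
    then obtain a b c where "(a, b, c, x) \<in> G"
      unfolding G0of_def by blast
    with subgroup_unit obtain a' b' c' d' where
      "(a', b', c', d') \<in> G" "Bmult q (a, b, c, x) (a', b', c', d') = (1, 0, 0, 1)"
      using subgroup_left_quotient by (metis prod_cases4)
    moreover from this have "inverse x = d'"
      by (simp add: inverse_unique)
    ultimately show "inverse x \<in> G0of G"
      unfolding G0of_def by blast
  qed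
  then obtain g where g: "G0of G = range (\<lambda>k::nat. g ^ k)"
    by blast
  then have "g ^ mm q n \<in> Fq2 q" "g ^ mm q n \<noteq> 0"
    using power_mm[of g] by (metis power_one_right rangeI)+
  then have "g ^ (mm q n * (q\<^sup>2 - 1)) = 1"
    by (simp add: Fq2_iff_power_eq_1 power_mult)
  with g show ?thesis
    by blast
qed

lemma conj_unipotent_mem:
  assumes g: "(a, \<beta>, \<gamma>, \<delta>) \<in> G" and u: "(1, b, c, \<epsilon>) \<in> G"
  shows "\<exists>c' d'. (1, a * b, c', d') \<in> G \<and> (b = 0 \<longrightarrow> c' = a ^ (q + 1) * c)"
proof -
  obtain w where "w \<in> G" and w: "Bmult q (a, \<beta>, \<gamma>, \<delta>) w = Bmult q (1, b, c, \<epsilon>) (a, \<beta>, \<gamma>, \<delta>)"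
    using subgroup_left_quotient[OF g subgroup_Bmult[OF u g]] by blast
  obtain a1 b1 c1 d1 where w_def: "w = (a1, b1, c1, d1)"
    by (cases w) auto
  have "a \<noteq> 0"
    using subgroup_Bset[OF g] by simp
  with w have "a1 = 1" "b1 = a * b"
    unfolding w_def by (auto simp: mult.commute)
  moreover have "b = 0 \<longrightarrow> c1 = a ^ (q + 1) * c"
    using w unfolding w_def \<open>a1 = 1\<close> by auto
  ultimately show ?thesis
    using \<open>w \<in> G\<close> w_def by blast
qed

lemma G3of_diff:
  assumes "(1, b, c, d) \<in> G" "(1, b, c', d') \<in> G"
  shows "c' - c \<in> G3of G"
proof -
  obtain w where "w \<in> G" and w: "Bmult q (1, b, c, d) w = (1, b, c', d')"
    using subgroup_left_quotient[OF assms] by blast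
  then show ?thesis
    unfolding G3of_def by (cases w) (auto simp: algebra_simps)
qed

lemma G2of_is_vs: "is_vs_over (F2 (G0of G)) (G2of G)"
proof (rule is_vs_over_gen_fieldI)
  show "0 \<in> G2of G"
    using subgroup_unit unfolding G2of_def by blast
next
  fix x y assume "x \<in> G2of G" "y \<in> G2of G"
  then show "x + y \<in> G2of G"
    unfolding G2of_def using subgroup_Bmult by fastforce
next
  fix x assume "x \<in> G2of G"
  then obtain c d where u: "(1, x, c, d) \<in> G"
    unfolding G2of_def by blast
  obtain a' b' c' d' where "(a', b', c', d') \<in> G" "Bmult q (1, x, c, d) (a', b', c', d') = (1, 0, 0, 1)"
    using subgroup_left_quotient[OF u subgroup_unit] by (metis prod_cases4)
  moreover from this have "b' = - x"
    by (auto simp: eq_neg_iff_add_eq_0 add.commute)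
  ultimately show "- x \<in> G2of G"
    unfolding G2of_def by auto
next
  fix s x assume "s \<in> (\<lambda>x. x ^ mm q n) ` G0of G" "x \<in> G2of G"
  then obtain a b c d c' d' where "s = d ^ mm q n" "(a, b, c, d) \<in> G" "(1, x, c', d') \<in> G"
    unfolding G0of_def G2of_def by blast
  then show "s * x \<in> G2of G"
    using conj_unipotent_mem subgroup_Bset unfolding G2of_def by fastforce
qed

lemma G3of_is_vs: "is_vs_over (F3 (G0of G)) (G3of G)"
proof (rule is_vs_over_gen_fieldI)
  show "0 \<in> G3of G"
    using subgroup_unit unfolding G3of_def by blast
next
  fix x y assume "x \<in> G3of G" "y \<in> G3of G"
  then show "x + y \<in> G3of G"
    unfolding G3of_def using subgroup_Bmult by fastforce
next
  fix x assume "x \<in> G3of G"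
  then obtain d where "(1, 0, x, d) \<in> G"
    unfolding G3of_def by blast
  from G3of_diff[OF this subgroup_unit] show "- x \<in> G3of G"
    by simp
next
  fix s x assume "s \<in> (\<lambda>x. x ^ (q ^ n + 1)) ` G0of G" "x \<in> G3of G"
  then obtain a b c d d' where s: "s = d ^ (q ^ n + 1)" and "(a, b, c, d) \<in> G" "(1, 0, x, d') \<in> G"
    unfolding G0of_def G3of_def by blast
  moreover have "a = d ^ mm q n"
    using subgroup_Bset[OF \<open>(a, b, c, d) \<in> G\<close>] by simp
  then have "s = a ^ (q + 1)"
    unfolding s by (simp only: mm_mult[symmetric] power_mult)
  ultimately show "s * x \<in> G3of G"
    using conj_unipotent_mem unfolding G3of_def by fastforce
qed

lemma commutator_mem_G3of:
  assumes "b1 \<in> G2of G" "b2 \<in> G2of G"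
  shows "b1 * b2 ^ q - b2 * b1 ^ q \<in> G3of G"
proof -
  obtain c1 d1 c2 d2 where u: "(1, b1, c1, d1) \<in> G" "(1, b2, c2, d2) \<in> G"
    using assms unfolding G2of_def by blast
  have "(1, b1 + b2, c2 + b1 ^ q * b2 + c1, d2 * d1) \<in> G"
    using subgroup_Bmult[OF u(2) u(1)] by (simp add: add.commute)
  moreover have "(1, b1 + b2, c1 + b2 ^ q * b1 + c2, d1 * d2) \<in> G"
    using subgroup_Bmult[OF u(1) u(2)] by simp
  ultimately show ?thesis
    using G3of_diff by (fastforce simp: algebra_simps)
qed

lemma norm_mem_G3of:
  assumes "p = 2" "b \<in> G2of G"
  shows "b ^ (q + 1) \<in> G3of G"
proof -
  obtain c d where u: "(1, b, c, d) \<in> G"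
    using assms unfolding G2of_def by blast
  have "(1, b + b, c + b ^ q * b + c, d * d) \<in> G"
    using subgroup_Bmult[OF u u] by simp
  then show ?thesis
    unfolding G3of_def using two_eq_zero_iff assms(1) by (auto simp: algebra_simps)
qed

lemma triple_ok_subgroup: "triple_ok p q n (G0of G) (G2of G) (G3of G)"
proof -
  have "G2of G \<subseteq> Fq2 q" "G3of G \<subseteq> {c \<in> Fq2 q. c ^ q + c = 0}"
    unfolding G2of_def G3of_def using subgroup_Bset by fastforce+
  moreover have "Wset p q (G2of G) \<subseteq> G3of G"
    unfolding Wset_def using commutator_mem_G3of norm_mem_G3of by auto
  ultimately show ?thesis
    unfolding triple_ok_def using G0of_cyclic G2of_is_vs G3of_is_vs by blast
qed

end

lemma conjB_one:
  fixes G :: "('k \<times> 'k \<times> 'k \<times> 'k) set"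
  assumes "subgroup G (Bgrp q n)"
  shows "conjB q n \<one>\<^bsub>Bgrp q n\<^esub> G = G"
proof -
  have "\<one>\<^bsub>Bgrp q n\<^esub> \<otimes>\<^bsub>Bgrp q n\<^esub> g \<otimes>\<^bsub>Bgrp q n\<^esub> inv\<^bsub>Bgrp q n\<^esub> \<one>\<^bsub>Bgrp q n\<^esub> = g"
    if "g \<in> G" for g
    using that subgroup.subset[OF assms] by (auto simp del: Bgrp_simps)
  then show ?thesis
    unfolding conjB_def by simp
qed
subsection \<open>Lifts of the norm\<close>

text \<open>A unipotent \<open>[1, b, c]\<close> has \<open>c ^ q + c = b ^ (q + 1)\<close>: \<open>c\<close> lies over the norm of \<open>b\<close> under
  the trace map from \<open>Fq2 q\<close> to \<open>\<bbbF>\<^sub>q\<close>. A subgroup with prescribed data is built from a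
  choice \<open>f b\<close> of such a \<open>c\<close> for every \<open>b \<in> G\<^sub>2\<close> that respects the group law modulo \<open>G\<^sub>3\<close>.\<close>

definition norm_trace_lift :: "'k set \<Rightarrow> ('k \<Rightarrow> 'k) \<Rightarrow> bool" where
  "norm_trace_lift S f \<longleftrightarrow> (\<forall>b\<in>S. f b \<in> Fq2 q \<and> f b ^ q + f b = b ^ (q + 1))"

definition quadratic_mod :: "'k set \<Rightarrow> 'k set \<Rightarrow> ('k \<Rightarrow> 'k) \<Rightarrow> bool" where
  "quadratic_mod V S f \<longleftrightarrow> (\<forall>x\<in>S. \<forall>y\<in>S. f (x + y) - f x - f y - x ^ q * y \<in> V)"

definition equivariant_mod :: "'k set \<Rightarrow> 'k set \<Rightarrow> 'k set \<Rightarrow> ('k \<Rightarrow> 'k) \<Rightarrow> bool" where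
  "equivariant_mod V G0 S f \<longleftrightarrow>
     (\<forall>d\<in>G0. \<forall>b\<in>S. f (d ^ mm q n * b) - (d ^ mm q n) ^ (q + 1) * f b \<in> V)"

lemma q_squared_minus_1_dvd: "(q\<^sup>2 - 1) dvd (q ^ (2 * n) - 1)"
proof -
  have "[q\<^sup>2 = 1] (mod (q\<^sup>2 - 1))"
    using q_squared_gt_1 by (simp add: cong_altdef_nat)
  then have "[(q\<^sup>2) ^ n = 1 ^ n] (mod (q\<^sup>2 - 1))"
    by (rule cong_pow)
  then show ?thesis
    unfolding power_mult power_one by (rule cong_to_1_nat)
qed

lemma exists_Fq2_not_Fq: "\<exists>w::'k. w \<in> Fq2 q \<and> w ^ q \<noteq> w"
proof -
  obtain \<gamma> :: 'k where "\<gamma> \<noteq> 0" and gen: "\<And>x. x \<noteq> 0 \<Longrightarrow> \<exists>i. x = \<gamma> ^ i"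
    using finite_field_generator by blast
  obtain M where M: "q ^ (2 * n) - 1 = (q\<^sup>2 - 1) * M"
    using q_squared_minus_1_dvd by (elim dvdE)
  have "q ^ (2 * n) > 1"
    using one_less_power[of q "2 * n"] q_ge_2 odd_n by (simp add: odd_pos)
  then have "M > 0"
    using M by (cases M) auto
  define w where "w = \<gamma> ^ M"
  have "w \<noteq> 0"
    unfolding w_def using \<open>\<gamma> \<noteq> 0\<close> by simp
  have "w ^ (q\<^sup>2 - 1) = 1"
    using power_card_minus_one_eq_1[OF \<open>\<gamma> \<noteq> 0\<close>] card_UNIV M
    unfolding w_def by (simp add: mult.commute flip: power_mult)
  then have "w \<in> Fq2 q"
    using Fq2_iff_power_eq_1[OF \<open>w \<noteq> 0\<close>] by simp
  moreover have "w ^ q \<noteq> w"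
  proof
    assume "w ^ q = w"
    obtain r where r: "q = Suc r"
      using q_ge_2 by (cases q) auto
    with \<open>w ^ q = w\<close> have "w ^ r = 1"
      using \<open>w \<noteq> 0\<close> by simp
    then have "\<gamma> ^ (M * (q - 1)) = 1"
      unfolding w_def r by (simp add: power_mult)
    moreover have "q - 1 < q\<^sup>2 - 1"
      using q_ge_2 power_strict_increasing[of 1 2 q] by simp
    then have "M * (q - 1) < card (UNIV :: 'k set) - 1"
      using card_UNIV M \<open>M > 0\<close> by (simp add: mult.commute)
    ultimately show False
      using generator_power_eq_1_imp_le[OF gen] \<open>M > 0\<close> q_ge_2 by fastforce
  qed
  ultimately show ?thesis
    by blast
qed

lemma trace_one_exists:
  assumes "p = 2"
  shows "\<exists>\<theta>::'k. \<theta> \<in> Fq2 q \<and> \<theta> ^ q + \<theta> = 1"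
proof -
  obtain w :: 'k where w: "w \<in> Fq2 q" "w ^ q \<noteq> w"
    using exists_Fq2_not_Fq by blast
  define t where "t = w ^ q + w"
  have "t \<noteq> 0"
  proof
    assume "t = 0"
    then have "w ^ q = - w"
      unfolding t_def by (simp add: eq_neg_iff_add_eq_0)
    with w(2) show False
      using char_2_uminus[OF assms] by simp
  qed
  have "t ^ q = t"
    unfolding t_def frobenius_add Fq2_frobenius_frobenius[OF w(1)] by (rule add.commute)
  then have "(w / t) ^ q + w / t = t / t"
    unfolding power_divide by (simp add: add_divide_distrib[symmetric] t_def)
  moreover have "w / t \<in> Fq2 q"
    unfolding t_def using w(1) by (simp add: Fq2_add Fq2_divide Fq2_power)
  ultimately show ?thesis
    using \<open>t \<noteq> 0\<close> by auto
qed

lemma of_nat_q_squared_minus_1: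
  assumes "p = 2"
  shows "(of_nat (q\<^sup>2 - 1) :: 'k) = 1"
proof -
  have "(of_nat q :: 'k) = 0"
    using CHAR_eq e_ge_1 q_def by (simp add: of_nat_eq_0_iff_char_dvd)
  then have "(of_nat (q\<^sup>2 - 1) :: 'k) = - 1"
    using q_squared_gt_1 by (simp add: of_nat_diff)
  then show ?thesis
    using char_2_uminus[OF assms] by simp
qed

text \<open>Since \<open>\<alpha> ^ (q\<^sup>2 - 1) = 1\<close>, the sum runs over the cyclic group generated by \<open>\<alpha>\<close>, which
  makes the average exactly equivariant. It has \<open>q\<^sup>2 - 1\<close> terms, an odd number in characteristic 2,
  so averaging preserves the equation \<open>c ^ q + c = b ^ (q + 1)\<close>.\<close>

definition average :: "'k \<Rightarrow> ('k \<Rightarrow> 'k) \<Rightarrow> 'k \<Rightarrow> 'k" where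
  "average \<alpha> f b = (\<Sum>i<q\<^sup>2 - 1. inverse \<alpha> ^ (i * (q + 1)) * f (\<alpha> ^ i * b))"

lemma average_mult:
  assumes "\<alpha> \<in> Fq2 q" "\<alpha> \<noteq> 0"
  shows "average \<alpha> f (\<alpha> * b) = \<alpha> ^ (q + 1) * average \<alpha> f b"
proof -
  define h where "h i = inverse \<alpha> ^ (i * (q + 1)) * f (\<alpha> ^ i * b)" for i
  have "\<alpha> ^ (q\<^sup>2 - 1) = 1"
    using assms Fq2_iff_power_eq_1 by blast
  moreover from this have "inverse \<alpha> ^ ((q\<^sup>2 - 1) * (q + 1)) = 1"
    by (simp only: power_mult power_inverse inverse_1 power_one)
  ultimately have "h (q\<^sup>2 - 1) = h 0"
    unfolding h_def by simp
  have "inverse \<alpha> ^ (i * (q + 1)) * f (\<alpha> ^ i * (\<alpha> * b)) = \<alpha> ^ (q + 1) * h (Suc i)" for i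
  proof -
    have weight: "\<alpha> ^ (q + 1) * inverse \<alpha> ^ (Suc i * (q + 1)) = inverse \<alpha> ^ (i * (q + 1))"
      using inverse_power_mult_power[OF assms(2), of "q + 1"] by (simp add: power_add algebra_simps)
    have "\<alpha> ^ (q + 1) * h (Suc i) = (\<alpha> ^ (q + 1) * inverse \<alpha> ^ (Suc i * (q + 1))) * f (\<alpha> ^ Suc i * b)"
      unfolding h_def by (simp only: mult.assoc)
    also have "\<dots> = inverse \<alpha> ^ (i * (q + 1)) * f (\<alpha> ^ i * (\<alpha> * b))"
      unfolding weight by (simp add: algebra_simps)
    finally show ?thesis
      by (rule sym)
  qed
  then have "average \<alpha> f (\<alpha> * b) = \<alpha> ^ (q + 1) * (\<Sum>i<q\<^sup>2 - 1. h (Suc i))"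
    unfolding average_def by (simp add: sum_distrib_left)
  also have "\<dots> = \<alpha> ^ (q + 1) * (\<Sum>i<q\<^sup>2 - 1. h i)"
    unfolding sum_lessThan_shift_periodic[OF \<open>h (q\<^sup>2 - 1) = h 0\<close>] ..
  also have "\<dots> = \<alpha> ^ (q + 1) * average \<alpha> f b"
    unfolding average_def h_def ..
  finally show ?thesis .
qed

lemma average_power_mult:
  assumes "\<alpha> \<in> Fq2 q" "\<alpha> \<noteq> 0"
  shows "average \<alpha> f (\<alpha> ^ k * b) = (\<alpha> ^ k) ^ (q + 1) * average \<alpha> f b"
proof (induction k)
  case (Suc k)
  then show ?case
    using average_mult[OF assms, of f "\<alpha> ^ k * b"] by (simp add: mult.assoc power_mult_distrib)
qed simp

context
  fixes \<alpha> :: 'k and S :: "'k set"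
  assumes char_2: "p = 2" and \<alpha>: "\<alpha> \<in> Fq2 q" "\<alpha> \<noteq> 0"
    and S_closed: "\<And>b i. b \<in> S \<Longrightarrow> \<alpha> ^ i * b \<in> S"
begin

lemma weight_norm: "inverse \<alpha> ^ (i * (q + 1)) * (\<alpha> ^ i) ^ (q + 1) = 1"
  using inverse_power_mult_power[OF \<alpha>(2)] by (simp only: power_mult[symmetric])

lemma norm_trace_lift_average: "norm_trace_lift S f \<Longrightarrow> norm_trace_lift S (average \<alpha> f)"
  unfolding norm_trace_lift_def
proof (intro ballI conjI)
  fix b assume lift: "\<forall>b\<in>S. f b \<in> Fq2 q \<and> f b ^ q + f b = b ^ (q + 1)" and "b \<in> S"
  then have f: "f (\<alpha> ^ i * b) \<in> Fq2 q" "f (\<alpha> ^ i * b) ^ q + f (\<alpha> ^ i * b) = (\<alpha> ^ i * b) ^ (q + 1)"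
    for i
    using S_closed by blast+
  have weight: "inverse \<alpha> ^ (i * (q + 1)) \<in> Fq2 q" "(inverse \<alpha> ^ (i * (q + 1))) ^ q = inverse \<alpha> ^ (i * (q + 1))"
    for i
  proof -
    have "inverse \<alpha> ^ i \<in> Fq2 q"
      using \<alpha>(1) by (intro Fq2_power Fq2_inverse)
    then show "inverse \<alpha> ^ (i * (q + 1)) \<in> Fq2 q" "(inverse \<alpha> ^ (i * (q + 1))) ^ q = inverse \<alpha> ^ (i * (q + 1))"
      unfolding power_mult by (rule Fq2_power, rule Fq2_norm_frobenius)
  qed
  show "average \<alpha> f b \<in> Fq2 q"
    unfolding average_def using f weight by (intro Fq2_sum Fq2_mult)
  have "average \<alpha> f b ^ q + average \<alpha> f b = (\<Sum>i<q\<^sup>2 - 1. b ^ (q + 1))"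
    unfolding average_def frobenius_sum sum.distrib[symmetric]
  proof (rule sum.cong)
    fix i
    let ?c = "inverse \<alpha> ^ (i * (q + 1))" and ?F = "f (\<alpha> ^ i * b)"
    have "(?c * ?F) ^ q + ?c * ?F = ?c * (?F ^ q + ?F)"
      by (simp only: power_mult_distrib weight(2) distrib_left[symmetric])
    also have "\<dots> = (?c * (\<alpha> ^ i) ^ (q + 1)) * b ^ (q + 1)"
      by (simp only: f(2) power_mult_distrib mult.assoc)
    finally show "(?c * ?F) ^ q + ?c * ?F = b ^ (q + 1)"
      by (simp only: weight_norm mult_1)
  qed simp
  then show "average \<alpha> f b ^ q + average \<alpha> f b = b ^ (q + 1)"
    using of_nat_q_squared_minus_1[OF char_2] by simp
qed

lemma quadratic_mod_average:
  assumes "is_subfield_set F" "is_vs_over F V" "inverse \<alpha> ^ (q + 1) \<in> F" "quadratic_mod V S f"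
  shows "quadratic_mod V S (average \<alpha> f)"
  unfolding quadratic_mod_def
proof (intro ballI)
  fix x y assume "x \<in> S" "y \<in> S"
  define E where "E i = f (\<alpha> ^ i * x + \<alpha> ^ i * y) - f (\<alpha> ^ i * x) - f (\<alpha> ^ i * y)
    - (\<alpha> ^ i * x) ^ q * (\<alpha> ^ i * y)" for i
  have "E i \<in> V" for i
    unfolding E_def using assms(4) S_closed \<open>x \<in> S\<close> \<open>y \<in> S\<close> unfolding quadratic_mod_def by blast
  moreover have "inverse \<alpha> ^ (i * (q + 1)) \<in> F" for i
    unfolding mult.commute[of i] power_mult by (rule is_subfield_set_power[OF assms(1,3)])
  ultimately have "(\<Sum>i<q\<^sup>2 - 1. inverse \<alpha> ^ (i * (q + 1)) * E i) \<in> V"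
    by (intro is_vs_over_sum[OF assms(2)] is_vs_over_smult[OF assms(2)])
  moreover have "average \<alpha> f (x + y) - average \<alpha> f x - average \<alpha> f y
      = (\<Sum>i<q\<^sup>2 - 1. inverse \<alpha> ^ (i * (q + 1)) * E i + x ^ q * y)"
    unfolding average_def sum_subtractf[symmetric]
  proof (rule sum.cong)
    fix i
    have "inverse \<alpha> ^ (i * (q + 1)) * ((\<alpha> ^ i * x) ^ q * (\<alpha> ^ i * y)) = x ^ q * y"
      using weight_norm[of i] by (simp add: power_mult_distrib algebra_simps)
    then show "inverse \<alpha> ^ (i * (q + 1)) * f (\<alpha> ^ i * (x + y)) - inverse \<alpha> ^ (i * (q + 1)) * f (\<alpha> ^ i * x)
        - inverse \<alpha> ^ (i * (q + 1)) * f (\<alpha> ^ i * y) = inverse \<alpha> ^ (i * (q + 1)) * E i + x ^ q * y"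
      unfolding E_def by (simp add: algebra_simps)
  qed simp
  ultimately show "average \<alpha> f (x + y) - average \<alpha> f x - average \<alpha> f y - x ^ q * y \<in> V"
    using of_nat_q_squared_minus_1[OF char_2] by (simp add: sum.distrib)
qed

end

text \<open>In characteristic 2, a lift on an additive subgroup \<open>S\<close> extends to \<open>S \<union> (v + S)\<close> by
  \<open>f (v + x) = f x + \<theta> * v ^ (q + 1) + v ^ q * x\<close>, where \<open>\<theta> ^ q + \<theta> = 1\<close>; note that
  \<open>x = (v + x) + v\<close>.\<close>

definition extend_lift :: "'k \<Rightarrow> 'k \<Rightarrow> 'k set \<Rightarrow> ('k \<Rightarrow> 'k) \<Rightarrow> 'k \<Rightarrow> 'k" where
  "extend_lift \<theta> v S f w = (if w \<in> S then f w else f (w + v) + \<theta> * v ^ (q + 1) + v ^ q * (w + v))"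

definition lift_group :: "'k set \<Rightarrow> 'k set \<Rightarrow> 'k set \<Rightarrow> ('k \<Rightarrow> 'k) \<Rightarrow> ('k \<times> 'k \<times> 'k \<times> 'k) set"
  where "lift_group G0 G2 G3 f = {(d ^ mm q n, b, f b + t, d) | d b t. d \<in> G0 \<and> b \<in> G2 \<and> t \<in> G3}"

context
  fixes G0 G2 G3 :: "'k set"
  assumes triple: "triple_ok p q n G0 G2 G3"
begin

lemma G2_subset: "G2 \<subseteq> Fq2 q"
  and G2_is_vs: "is_vs_over (F2 G0) G2"
  and G3_subset: "G3 \<subseteq> {c \<in> Fq2 q. c ^ q + c = 0}"
  and G3_is_vs: "is_vs_over (F3 G0) G3"
  and Wset_subset: "Wset p q G2 \<subseteq> G3"
  using triple unfolding triple_ok_def by auto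

lemma G0_generator:
  obtains g where "g ^ (mm q n * (q\<^sup>2 - 1)) = 1" "G0 = range (\<lambda>k::nat. g ^ k)"
  using triple unfolding triple_ok_def by blast

lemma G0_mult:
  assumes "d \<in> G0" "d' \<in> G0"
  shows "d * d' \<in> G0"
proof (rule G0_generator)
  fix g assume G0: "G0 = range (\<lambda>k::nat. g ^ k)"
  then obtain i j where "d = g ^ i" "d' = g ^ j"
    using assms by blast
  then have "d * d' = g ^ (i + j)"
    by (simp add: power_add)
  then show ?thesis
    unfolding G0 by blast
qed

lemma G0_one: "1 \<in> G0"
proof (rule G0_generator)
  fix g assume "G0 = range (\<lambda>k::nat. g ^ k)"
  moreover have "g ^ 0 \<in> range (\<lambda>k::nat. g ^ k)"
    by (rule rangeI)
  ultimately show ?thesis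
    by simp
qed

lemma G0_power_mm: "d \<in> G0 \<Longrightarrow> d ^ mm q n \<in> Fq2 q \<and> d ^ mm q n \<noteq> 0"
proof (rule G0_generator)
  fix g assume g: "g ^ (mm q n * (q\<^sup>2 - 1)) = 1" and G0: "G0 = range (\<lambda>k::nat. g ^ k)"
  assume "d \<in> G0"
  then obtain k where d: "d = g ^ k"
    using G0 by blast
  have "(d ^ mm q n) ^ (q\<^sup>2 - 1) = 1"
    using g unfolding d by (metis mult.commute power_mult power_one)
  moreover from this have "d ^ mm q n \<noteq> 0"
    using q_squared_gt_1 by (metis zero_less_diff zero_neq_one zero_power)
  ultimately show ?thesis
    by (simp add: Fq2_iff_power_eq_1)
qed

lemma power_mm_mem_F2: "d \<in> G0 \<Longrightarrow> d ^ mm q n \<in> F2 G0"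
  by (rule subsetD[OF subset_gen_field imageI])

lemma norm_power_mm_mem_F3: "d \<in> G0 \<Longrightarrow> (d ^ mm q n) ^ (q + 1) \<in> F3 G0"
  unfolding power_mult[symmetric] mm_mult by (rule subsetD[OF subset_gen_field imageI])

lemma commutator_mem_G3:
  assumes "x \<in> G2" "y \<in> G2"
  shows "x * y ^ q - y * x ^ q \<in> G3"
proof (cases "p = 2")
  case False
  then show ?thesis
    using Wset_subset assms unfolding Wset_def by auto
next
  case True
  then have norm: "b ^ (q + 1) \<in> G3" if "b \<in> G2" for b
    using Wset_subset that unfolding Wset_def by auto
  have "(x + y) ^ (q + 1) - x ^ (q + 1) - y ^ (q + 1) = x * y ^ q + y * x ^ q"
    by (simp add: frobenius_add algebra_simps)
  also have "\<dots> = x * y ^ q - y * x ^ q"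
    using char_2_uminus[OF True, of "y * x ^ q"] by simp
  finally show ?thesis
    using is_vs_over_diff[OF G3_is_vs] norm assms is_vs_over_add[OF G2_is_vs] by metis
qed

context
  fixes f :: "'k \<Rightarrow> 'k"
  assumes lift: "norm_trace_lift G2 f" and quadratic: "quadratic_mod G3 G2 f"
    and equivariant: "equivariant_mod G3 G0 G2 f"
begin

lemma lift_zero_mem_G3: "f 0 \<in> G3"
proof -
  have "f (0 + 0) - f 0 - f 0 - 0 ^ q * 0 \<in> G3"
    using quadratic is_vs_over_zero[OF G2_is_vs] unfolding quadratic_mod_def by blast
  then show ?thesis
    using is_vs_over_uminus[OF G3_is_vs] by fastforce
qed

lemma lift_group_subset: "lift_group G0 G2 G3 f \<subseteq> Bset q n"
proof
  fix x assume "x \<in> lift_group G0 G2 G3 f"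
  then obtain d b t where x: "x = (d ^ mm q n, b, f b + t, d)" and mem: "d \<in> G0" "b \<in> G2" "t \<in> G3"
    unfolding lift_group_def by blast
  have fb: "f b \<in> Fq2 q" "f b ^ q + f b = b ^ (q + 1)"
    using lift mem(2) unfolding norm_trace_lift_def by auto
  have t: "t \<in> Fq2 q" "t ^ q + t = 0"
    using G3_subset mem(3) by auto
  have "(f b + t) ^ q + (f b + t) = (f b ^ q + f b) + (t ^ q + t)"
    by (simp add: frobenius_add algebra_simps)
  then have "(f b + t) ^ q + (f b + t) = b ^ (q + 1)"
    unfolding fb t by simp
  then show "x \<in> Bset q n"
    unfolding x using G0_power_mm[OF mem(1)] G2_subset mem(2) fb t by (auto intro: Fq2_add)
qed

text \<open>The error terms of \<open>f\<close> and a commutator absorb the extra terms of the product.\<close>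

lemma lift_group_mult:
  assumes "x \<in> lift_group G0 G2 G3 f" "y \<in> lift_group G0 G2 G3 f"
  shows "Bmult q x y \<in> lift_group G0 G2 G3 f"
proof -
  obtain d' b' t' d b t where x: "x = (d' ^ mm q n, b', f b' + t', d')"
    and y: "y = (d ^ mm q n, b, f b + t, d)"
    and mem: "d' \<in> G0" "b' \<in> G2" "t' \<in> G3" "d \<in> G0" "b \<in> G2" "t \<in> G3"
    using assms unfolding lift_group_def by blast
  define a where "a = d ^ mm q n"
  define b0 where "b0 = a * b'"
  have b0: "b0 \<in> G2"
    unfolding b0_def a_def using is_vs_over_smult[OF G2_is_vs power_mm_mem_F2] mem by blast
  define E1 where "E1 = f (b0 + b) - f b0 - f b - b0 ^ q * b"
  define E2 where "E2 = f b0 - a ^ (q + 1) * f b'"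
  define E3 where "E3 = b0 * b ^ q - b * b0 ^ q"
  define E4 where "E4 = a ^ (q + 1) * t'"
  have "E1 \<in> G3"
    unfolding E1_def using quadratic b0 mem(5) unfolding quadratic_mod_def by blast
  moreover have "E2 \<in> G3"
    unfolding E2_def b0_def a_def using equivariant mem(2,4) unfolding equivariant_mod_def by blast
  moreover have "E3 \<in> G3"
    unfolding E3_def using commutator_mem_G3 b0 mem(5) .
  moreover have "E4 \<in> G3"
    unfolding E4_def a_def using is_vs_over_smult[OF G3_is_vs norm_power_mm_mem_F3] mem(3,4) by blast
  ultimately have T: "E4 + t - E1 - E2 + E3 \<in> G3"
    using mem(6) by (intro is_vs_over_add[OF G3_is_vs] is_vs_over_diff[OF G3_is_vs])
  have "Bmult q x y = ((d' * d) ^ mm q n, b0 + b, f (b0 + b) + (E4 + t - E1 - E2 + E3), d' * d)"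
    unfolding x y E1_def E2_def E3_def E4_def b0_def a_def
    by (simp add: algebra_simps power_mult_distrib)
  moreover have "b0 + b \<in> G2"
    using is_vs_over_add[OF G2_is_vs b0 mem(5)] .
  ultimately show ?thesis
    unfolding lift_group_def using G0_mult mem T by blast
qed

lemma subgroup_lift_group: "subgroup (lift_group G0 G2 G3 f) (Bgrp q n)"
proof (rule B.finite_subgroupI)
  have "(1 ^ mm q n, 0, f 0 + - f 0, 1) \<in> lift_group G0 G2 G3 f"
    unfolding lift_group_def using G0_one is_vs_over_zero[OF G2_is_vs]
      is_vs_over_uminus[OF G3_is_vs lift_zero_mem_G3] by blast
  then show "\<one>\<^bsub>Bgrp q n\<^esub> \<in> lift_group G0 G2 G3 f"
    by simp
qed (use lift_group_subset lift_group_mult in auto)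

lemma G0of_lift_group: "G0of (lift_group G0 G2 G3 f) = G0"
proof -
  have "(d ^ mm q n, 0, f 0 + - f 0, d) \<in> lift_group G0 G2 G3 f" if "d \<in> G0" for d
    unfolding lift_group_def using that is_vs_over_zero[OF G2_is_vs]
      is_vs_over_uminus[OF G3_is_vs lift_zero_mem_G3] by blast
  then show ?thesis
    unfolding G0of_def lift_group_def by blast
qed

lemma G2of_lift_group: "G2of (lift_group G0 G2 G3 f) = G2"
proof -
  have "(1 ^ mm q n, b, f b + 0, 1) \<in> lift_group G0 G2 G3 f" if "b \<in> G2" for b
    unfolding lift_group_def using that G0_one is_vs_over_zero[OF G3_is_vs] by blast
  then show ?thesis
    unfolding G2of_def lift_group_def by force
qed

lemma G3of_lift_group: "G3of (lift_group G0 G2 G3 f) = G3"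
proof -
  have "(1 ^ mm q n, 0, f 0 + (c - f 0), 1) \<in> lift_group G0 G2 G3 f" if "c \<in> G3" for c
    unfolding lift_group_def using that G0_one is_vs_over_zero[OF G2_is_vs]
      is_vs_over_diff[OF G3_is_vs _ lift_zero_mem_G3] by blast
  moreover have "f 0 + t \<in> G3" if "t \<in> G3" for t
    using that is_vs_over_add[OF G3_is_vs lift_zero_mem_G3] by blast
  ultimately show ?thesis
    unfolding G3of_def lift_group_def by force
qed

end

lemma lift_exists_odd_char:
  assumes "p \<noteq> 2"
  shows "\<exists>f. norm_trace_lift G2 f \<and> quadratic_mod G3 G2 f \<and> equivariant_mod G3 G0 G2 f"
proof (intro exI conjI)
  define f where "f b = inverse 2 * b ^ (q + 1)" for b :: 'k
  have half: "inverse (2::'k) * 2 = 1"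
    using assms two_eq_zero_iff by simp
  show "norm_trace_lift G2 f"
    unfolding norm_trace_lift_def
  proof (intro ballI conjI)
    fix b assume "b \<in> G2"
    then have b: "b \<in> Fq2 q"
      using G2_subset by blast
    moreover have "(2::'k) \<in> Fq2 q"
      using Fq2_add[OF Fq2_1 Fq2_1] by (simp add: one_add_one)
    ultimately show "f b \<in> Fq2 q"
      unfolding f_def by (intro Fq2_mult Fq2_inverse Fq2_power)
    have "f b ^ q = f b"
      unfolding f_def power_mult_distrib power_inverse frobenius_two Fq2_norm_frobenius[OF b] ..
    then have "f b ^ q + f b = f b + f b"
      by (rule arg_cong)
    also have "\<dots> = (inverse 2 * 2) * b ^ (q + 1)"
      unfolding f_def by (simp only: mult_2_right distrib_right)
    finally show "f b ^ q + f b = b ^ (q + 1)"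
      unfolding half by simp
  qed
  show "quadratic_mod G3 G2 f"
    unfolding quadratic_mod_def
  proof (intro ballI)
    fix x y assume "x \<in> G2" "y \<in> G2"
    have "f (x + y) - f x - f y - x ^ q * y
        = inverse 2 * (x ^ q * y + y ^ q * x) - inverse 2 * 2 * (x ^ q * y)"
      unfolding f_def half by (simp add: frobenius_add algebra_simps)
    also have "\<dots> = inverse 2 * (x * y ^ q - y * x ^ q)"
      by (simp add: algebra_simps)
    finally show "f (x + y) - f x - f y - x ^ q * y \<in> G3"
      using is_vs_over_smult[OF G3_is_vs gen_field_inverse[OF two_mem_gen_field]
          commutator_mem_G3[OF \<open>x \<in> G2\<close> \<open>y \<in> G2\<close>]] by (simp only:)
  qed
  show "equivariant_mod G3 G0 G2 f"
    unfolding equivariant_mod_def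
  proof (intro ballI)
    fix d b
    have "f (d ^ mm q n * b) - (d ^ mm q n) ^ (q + 1) * f b = 0"
      unfolding f_def power_mult_distrib by (simp only: ac_simps diff_self)
    then show "f (d ^ mm q n * b) - (d ^ mm q n) ^ (q + 1) * f b \<in> G3"
      using is_vs_over_zero[OF G3_is_vs] by (simp only:)
  qed
qed

context
  fixes \<theta> v :: 'k and S :: "'k set"
  assumes char_2: "p = 2" and \<theta>: "\<theta> \<in> Fq2 q" "\<theta> ^ q + \<theta> = 1"
    and S_subset: "S \<subseteq> G2" and S_add: "\<And>x y. x \<in> S \<Longrightarrow> y \<in> S \<Longrightarrow> x + y \<in> S"
    and v: "v \<in> G2" "v \<notin> S"
begin

lemma translate_not_mem: "x \<in> S \<Longrightarrow> v + x \<notin> S"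
  using S_add[of "v + x" x] v(2) char_2_add_self[OF char_2, of x] by (auto simp: add.assoc)

lemma extend_lift_translate:
  assumes "x \<in> S"
  shows "extend_lift \<theta> v S f (v + x) = f x + \<theta> * v ^ (q + 1) + v ^ q * x"
proof -
  have "v + x + v = x + (v + v)"
    by (simp only: ac_simps)
  also have "\<dots> = x"
    using char_2_add_self[OF char_2, of v] by simp
  finally have "v + x + v = x" .
  then show ?thesis
    unfolding extend_lift_def by (simp only: if_not_P[OF translate_not_mem[OF assms]])
qed

lemma norm_trace_lift_extend:
  assumes "norm_trace_lift S f"
  shows "norm_trace_lift (S \<union> (+) v ` S) (extend_lift \<theta> v S f)"
  unfolding norm_trace_lift_def
proof (intro ballI)
  fix w assume "w \<in> S \<union> (+) v ` S"
  then consider "w \<in> S" | x where "x \<in> S" "w = v + x"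
    by blast
  then show "extend_lift \<theta> v S f w \<in> Fq2 q \<and> extend_lift \<theta> v S f w ^ q + extend_lift \<theta> v S f w = w ^ (q + 1)"
  proof cases
    case 1
    then show ?thesis
      using assms unfolding norm_trace_lift_def extend_lift_def by simp
  next
    case (2 x)
    have vx: "v \<in> Fq2 q" "x \<in> Fq2 q"
      using v(1) \<open>x \<in> S\<close> S_subset G2_subset by auto
    have fx: "f x \<in> Fq2 q" "f x ^ q + f x = x ^ (q + 1)"
      using assms \<open>x \<in> S\<close> unfolding norm_trace_lift_def by auto
    have "(f x + \<theta> * v ^ (q + 1) + v ^ q * x) ^ q + (f x + \<theta> * v ^ (q + 1) + v ^ q * x)
        = (f x ^ q + f x) + (\<theta> ^ q + \<theta>) * v ^ (q + 1) + v * x ^ q + v ^ q * x"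
      by (simp add: frobenius_add power_mult_distrib Fq2_norm_frobenius[OF vx(1)]
          Fq2_frobenius_frobenius[OF vx(1)] algebra_simps)
    also have "\<dots> = (v + x) ^ (q + 1)"
      unfolding fx(2) \<theta>(2) by (simp add: frobenius_add algebra_simps)
    finally show ?thesis
      unfolding 2 extend_lift_translate[OF \<open>x \<in> S\<close>]
      using fx(1) vx \<theta>(1) by (simp add: Fq2_add Fq2_mult Fq2_power)
  qed
qed

lemma extend_lift_in: "x \<in> S \<Longrightarrow> extend_lift \<theta> v S f x = f x"
  unfolding extend_lift_def by simp

lemma commutator_translate_mem_G3: "x \<in> S \<Longrightarrow> x * v ^ q - v * x ^ q \<in> G3"
  using commutator_mem_G3 S_subset v(1) by blast

text \<open>For \<open>x, y\<close> in \<open>S\<close>, the error term of the extension at \<open>(x, v + y)\<close>, \<open>(v + x, y)\<close> and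
  \<open>(v + x, v + y)\<close> differs from that of \<open>f\<close> at \<open>(x, y)\<close> by a commutator, by \<open>0\<close>, and by a
  commutator and the norm \<open>v ^ (q + 1)\<close>, respectively; all of these lie in \<open>G\<^sub>3\<close>.\<close>

context
  fixes f :: "'k \<Rightarrow> 'k"
  assumes quadratic_S: "quadratic_mod G3 S f"
begin

lemma defect_mem_G3: "x \<in> S \<Longrightarrow> y \<in> S \<Longrightarrow> f (x + y) - f x - f y - x ^ q * y \<in> G3"
  using quadratic_S unfolding quadratic_mod_def by blast

lemma extend_lift_defect_right:
  assumes "x \<in> S" "y \<in> S"
  shows "extend_lift \<theta> v S f (x + (v + y)) - extend_lift \<theta> v S f x - extend_lift \<theta> v S f (v + y)
    - x ^ q * (v + y) \<in> G3"
proof -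
  have "x + (v + y) = v + (x + y)"
    by (simp only: ac_simps)
  then have "extend_lift \<theta> v S f (x + (v + y)) - extend_lift \<theta> v S f x - extend_lift \<theta> v S f (v + y)
      - x ^ q * (v + y) = (f (x + y) + \<theta> * v ^ (q + 1) + v ^ q * (x + y)) - f x
      - (f y + \<theta> * v ^ (q + 1) + v ^ q * y) - x ^ q * (v + y)"
    using extend_lift_translate[OF S_add[OF assms]] extend_lift_translate[OF assms(2)]
      extend_lift_in[OF assms(1)] by (simp only:)
  also have "\<dots> = (f (x + y) - f x - f y - x ^ q * y) + (x * v ^ q - v * x ^ q)"
    by (simp add: algebra_simps)
  finally show ?thesis
    using is_vs_over_add[OF G3_is_vs defect_mem_G3[OF assms] commutator_translate_mem_G3[OF assms(1)]]
    by (simp only:)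
qed

lemma extend_lift_defect_left:
  assumes "x \<in> S" "y \<in> S"
  shows "extend_lift \<theta> v S f ((v + x) + y) - extend_lift \<theta> v S f (v + x) - extend_lift \<theta> v S f y
    - (v + x) ^ q * y \<in> G3"
proof -
  have "(v + x) + y = v + (x + y)"
    by (simp only: ac_simps)
  then have "extend_lift \<theta> v S f ((v + x) + y) - extend_lift \<theta> v S f (v + x) - extend_lift \<theta> v S f y
      - (v + x) ^ q * y = (f (x + y) + \<theta> * v ^ (q + 1) + v ^ q * (x + y))
      - (f x + \<theta> * v ^ (q + 1) + v ^ q * x) - f y - (v ^ q + x ^ q) * y"
    using extend_lift_translate[OF S_add[OF assms]] extend_lift_translate[OF assms(1)]
      extend_lift_in[OF assms(2)] frobenius_add[of v x] by (simp only:)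
  also have "\<dots> = f (x + y) - f x - f y - x ^ q * y"
    by (simp add: algebra_simps)
  finally show ?thesis
    using defect_mem_G3[OF assms] by (simp only:)
qed

lemma extend_lift_defect_both:
  assumes "x \<in> S" "y \<in> S"
  shows "extend_lift \<theta> v S f ((v + x) + (v + y)) - extend_lift \<theta> v S f (v + x)
    - extend_lift \<theta> v S f (v + y) - (v + x) ^ q * (v + y) \<in> G3"
proof -
  have "(v + x) + (v + y) = x + y + (v + v)"
    by (simp only: ac_simps)
  then have "(v + x) + (v + y) = x + y"
    using char_2_add_self[OF char_2, of v] by simp
  then have "extend_lift \<theta> v S f ((v + x) + (v + y)) - extend_lift \<theta> v S f (v + x)
      - extend_lift \<theta> v S f (v + y) - (v + x) ^ q * (v + y) = f (x + y)
      - (f x + \<theta> * v ^ (q + 1) + v ^ q * x) - (f y + \<theta> * v ^ (q + 1) + v ^ q * y)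
      - (v ^ q + x ^ q) * (v + y)"
    using extend_lift_in[OF S_add[OF assms]] extend_lift_translate[OF assms(1)]
      extend_lift_translate[OF assms(2)] frobenius_add[of v x] by (simp only:)
  also have "\<dots> = (f (x + y) - f x - f y - x ^ q * y) - v ^ (q + 1) - (x * v ^ q - v * x ^ q)
      - 2 * (\<theta> * v ^ (q + 1) + v ^ q * y + v * x ^ q)"
    by (simp add: algebra_simps)
  also have "\<dots> = (f (x + y) - f x - f y - x ^ q * y) - v ^ (q + 1) - (x * v ^ q - v * x ^ q)"
    using two_eq_zero_iff char_2 by simp
  also have "\<dots> \<in> G3"
  proof -
    have "v ^ (q + 1) \<in> G3"
      using Wset_subset char_2 v(1) unfolding Wset_def by auto
    then show ?thesis
      by (rule is_vs_over_diff[OF G3_is_vs is_vs_over_diff[OF G3_is_vs defect_mem_G3[OF assms]]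
          commutator_translate_mem_G3[OF assms(1)]])
  qed
  finally show ?thesis .
qed

lemma quadratic_mod_extend: "quadratic_mod G3 (S \<union> (+) v ` S) (extend_lift \<theta> v S f)"
  unfolding quadratic_mod_def
proof (intro ballI)
  fix x y assume "x \<in> S \<union> (+) v ` S" "y \<in> S \<union> (+) v ` S"
  then consider "x \<in> S" "y \<in> S" | y0 where "x \<in> S" "y0 \<in> S" "y = v + y0"
    | x0 where "x0 \<in> S" "x = v + x0" "y \<in> S" | x0 y0 where "x0 \<in> S" "y0 \<in> S" "x = v + x0" "y = v + y0"
    by blast
  then show "extend_lift \<theta> v S f (x + y) - extend_lift \<theta> v S f x - extend_lift \<theta> v S f y - x ^ q * y \<in> G3"
  proof cases
    case 1
    then show ?thesis
      using defect_mem_G3 S_add extend_lift_in by simp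
  next
    case (2 y0)
    then show ?thesis
      using extend_lift_defect_right[OF 2(1,2)] by (simp only:)
  next
    case (3 x0)
    then show ?thesis
      using extend_lift_defect_left[OF 3(1,3)] by (simp only:)
  next
    case (4 x0 y0)
    then show ?thesis
      using extend_lift_defect_both[OF 4(1,2)] by (simp only:)
  qed
qed

end

lemma lift_extend_translate:
  assumes "0 \<in> S" "norm_trace_lift S f" "quadratic_mod G3 S f"
  shows "\<exists>S' f'. insert v S \<subseteq> S' \<and> S' \<subseteq> G2 \<and> 0 \<in> S' \<and> (\<forall>x\<in>S'. \<forall>y\<in>S'. x + y \<in> S') \<and>
    norm_trace_lift S' f' \<and> quadratic_mod G3 S' f'"
proof (intro exI conjI)
  show "norm_trace_lift (S \<union> (+) v ` S) (extend_lift \<theta> v S f)"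
    using norm_trace_lift_extend[OF assms(2)] .
  show "quadratic_mod G3 (S \<union> (+) v ` S) (extend_lift \<theta> v S f)"
    using quadratic_mod_extend[OF assms(3)] .
  show "S \<union> (+) v ` S \<subseteq> G2"
    using S_subset v(1) is_vs_over_add[OF G2_is_vs] by blast
  show "insert v S \<subseteq> S \<union> (+) v ` S"
    using image_eqI[of v "(+) v" 0] assms(1) by auto
  show "0 \<in> S \<union> (+) v ` S"
    using assms(1) by blast
  show "\<forall>x\<in>S \<union> (+) v ` S. \<forall>y\<in>S \<union> (+) v ` S. x + y \<in> S \<union> (+) v ` S"
    using add_closed_union_translate[OF char_2_add_self[OF char_2] S_add] by blast
qed

end

lemma quadratic_lift_exists_char_2:
  assumes char_2: "p = 2"
  shows "\<exists>f. norm_trace_lift G2 f \<and> quadratic_mod G3 G2 f"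
proof -
  obtain \<theta> :: 'k where \<theta>: "\<theta> \<in> Fq2 q" "\<theta> ^ q + \<theta> = 1"
    using trace_one_exists[OF char_2] by blast
  have "\<exists>S f. A \<subseteq> S \<and> S \<subseteq> G2 \<and> 0 \<in> S \<and> (\<forall>x\<in>S. \<forall>y\<in>S. x + y \<in> S) \<and>
      norm_trace_lift S f \<and> quadratic_mod G3 S f" if "finite A" "A \<subseteq> G2" for A
    using that
  proof (induction A rule: finite_induct)
    case empty
    have "norm_trace_lift {0} (\<lambda>_. 0)" "quadratic_mod G3 {0} (\<lambda>_. 0)"
      unfolding norm_trace_lift_def quadratic_mod_def using is_vs_over_zero[OF G3_is_vs] by auto
    moreover have "{0} \<subseteq> G2"
      using is_vs_over_zero[OF G2_is_vs] by blast
    ultimately show ?case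
      by (intro exI[of _ "{0}"] exI[of _ "\<lambda>_. 0"]) simp
  next
    case (insert v A)
    then obtain S f where S: "A \<subseteq> S" "S \<subseteq> G2" "0 \<in> S" "\<forall>x\<in>S. \<forall>y\<in>S. x + y \<in> S"
      and f: "norm_trace_lift S f" "quadratic_mod G3 S f"
      by auto
    show ?case
    proof (cases "v \<in> S")
      case True
      with S f show ?thesis
        by (intro exI[of _ S] exI[of _ f]) simp
    next
      case False
      have "v \<in> G2"
        using insert.prems by blast
      moreover have "\<And>x y. x \<in> S \<Longrightarrow> y \<in> S \<Longrightarrow> x + y \<in> S"
        using S(4) by blast
      ultimately obtain S' f' where "insert v S \<subseteq> S'" "S' \<subseteq> G2" "0 \<in> S'"
        "\<forall>x\<in>S'. \<forall>y\<in>S'. x + y \<in> S'" "norm_trace_lift S' f'" "quadratic_mod G3 S' f'"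
        using lift_extend_translate[OF char_2 \<theta> S(2) _ _ False S(3) f] by blast
      with S(1) show ?thesis
        by (intro exI[of _ S'] exI[of _ f']) auto
    qed
  qed
  from this[of G2] obtain S f where "G2 \<subseteq> S" "S \<subseteq> G2" "norm_trace_lift S f" "quadratic_mod G3 S f"
    by auto
  then show ?thesis
    by (intro exI[of _ f]) (simp add: subset_antisym)
qed

lemma lift_exists_char_2:
  assumes char_2: "p = 2"
  shows "\<exists>f. norm_trace_lift G2 f \<and> quadratic_mod G3 G2 f \<and> equivariant_mod G3 G0 G2 f"
proof -
  obtain f0 where f0: "norm_trace_lift G2 f0" "quadratic_mod G3 G2 f0"
    using quadratic_lift_exists_char_2[OF char_2] by blast
  obtain g where G0: "G0 = range (\<lambda>k::nat. g ^ k)"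
    using G0_generator by blast
  define \<alpha> where "\<alpha> = g ^ mm q n"
  have power_\<alpha>: "\<alpha> ^ k = (g ^ k) ^ mm q n" for k
    unfolding \<alpha>_def by (simp only: power_mult[symmetric] mult.commute)
  have "g \<in> G0"
    unfolding G0 by (metis power_one_right rangeI)
  then have \<alpha>: "\<alpha> \<in> Fq2 q" "\<alpha> \<noteq> 0"
    unfolding \<alpha>_def using G0_power_mm by auto
  have closed: "\<alpha> ^ k * b \<in> G2" if "b \<in> G2" for b k
    unfolding power_\<alpha> using is_vs_over_smult[OF G2_is_vs power_mm_mem_F2] that G0 by blast
  have "inverse \<alpha> ^ (q + 1) \<in> F3 G0"
    unfolding power_inverse \<alpha>_def using gen_field_inverse norm_power_mm_mem_F3 \<open>g \<in> G0\<close> by blast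
  then have "quadratic_mod G3 G2 (average \<alpha> f0)"
    using quadratic_mod_average[OF char_2 \<alpha> closed is_subfield_set_gen_field G3_is_vs] f0(2) by blast
  moreover have "norm_trace_lift G2 (average \<alpha> f0)"
    using norm_trace_lift_average[OF char_2 \<alpha> closed f0(1)] .
  moreover have "equivariant_mod G3 G0 G2 (average \<alpha> f0)"
    unfolding equivariant_mod_def
  proof (intro ballI)
    fix d b assume "d \<in> G0"
    then obtain k where "d ^ mm q n = \<alpha> ^ k"
      unfolding G0 power_\<alpha> by blast
    then have "average \<alpha> f0 (d ^ mm q n * b) - (d ^ mm q n) ^ (q + 1) * average \<alpha> f0 b = 0"
      using average_power_mult[OF \<alpha>] by simp
    then show "average \<alpha> f0 (d ^ mm q n * b) - (d ^ mm q n) ^ (q + 1) * average \<alpha> f0 b \<in> G3"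
      using is_vs_over_zero[OF G3_is_vs] by (simp only:)
  qed
  ultimately show ?thesis
    by blast
qed

lemma subgroup_with_data_exists:
  "\<exists>H. subgroup H (Bgrp q n) \<and> G0of H = G0 \<and> G2of H = G2 \<and> G3of H = G3"
proof -
  obtain f where "norm_trace_lift G2 f" "quadratic_mod G3 G2 f" "equivariant_mod G3 G0 G2 f"
    using lift_exists_odd_char lift_exists_char_2 by blast
  then show ?thesis
    using subgroup_lift_group G0of_lift_group G2of_lift_group G3of_lift_group by blast
qed

end

end

theorem theorem3p6:
  fixes p q n e :: nat
    and G :: "('k::{field,finite} \<times> 'k \<times> 'k \<times> 'k) set"
  assumes "prime p" and "e \<ge> 1" and "q = p ^ e" and "odd n"
    and "card (UNIV :: 'k set) = q ^ (2 * n)"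
  shows "(subgroup G (Bgrp q n) \<longrightarrow>
           (\<exists>h \<in> carrier (Bgrp q n).
              triple_ok p q n (G0of (conjB q n h G)) (G2of (conjB q n h G)) (G3of (conjB q n h G))))
       \<and> (\<forall>G0 G2 G3 :: 'k set. triple_ok p q n G0 G2 G3 \<longrightarrow>
           (\<exists>H. subgroup H (Bgrp q n) \<and> G0of H = G0 \<and> G2of H = G2 \<and> G3of H = G3))"
proof -
  have "Bgrp_field TYPE('k) p q n e"
    unfolding Bgrp_field_def using assms by auto
  then interpret Bgrp_field p q n e .
  show ?thesis
  proof (intro conjI impI allI)
    assume "subgroup G (Bgrp q n)"
    then have "triple_ok p q n (G0of (conjB q n \<one>\<^bsub>Bgrp q n\<^esub> G)) (G2of (conjB q n \<one>\<^bsub>Bgrp q n\<^esub> G))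
        (G3of (conjB q n \<one>\<^bsub>Bgrp q n\<^esub> G))"
      unfolding conjB_one[OF \<open>subgroup G (Bgrp q n)\<close>] by (rule triple_ok_subgroup)
    then show "\<exists>h \<in> carrier (Bgrp q n).
        triple_ok p q n (G0of (conjB q n h G)) (G2of (conjB q n h G)) (G3of (conjB q n h G))"
      using B.one_closed by blast
  next
    fix G0 G2 G3 :: "'k set"
    assume "triple_ok p q n G0 G2 G3"
    then show "\<exists>H. subgroup H (Bgrp q n) \<and> G0of H = G0 \<and> G2of H = G2 \<and> G3of H = G3"
      by (rule subgroup_with_data_exists)
  qed
qed

end
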